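(* Let $f\colon X\to Y$ be a function of metric spaces, $m\ge0$, and let $D^{(m+1)}_f\colon\mathbb R_+\times\mathbb R_+\to\mathbb R_+$ be an $m$-dimensional control function of $f$. Define inductively, for $k>m+1$, $D^{(k)}_f(r_X,R_Y)=D^{(k-1)}_f(3r_X,R_Y)+2r_X$. Then each $D^{(k)}_f$ ($k\ge m+1$) is an $(m,k)$-dimensional control function of $f$.
   Context: For $r>0$, the $r$-components of $C\subset X$ are the equivalence classes of points of $C$ joined by finite sequences in $C$ with consecutive distances $\le r$. An $m$-dimensional control function of $f$ is $D_f\colon\mathbb R_+\times\mathbb R_+\to\mathbb R_+$ such that for all $r_X,R_Y>0$ every $A\subset X$ with $\operatorname{diam} f(A)\le R_Y$ is the union of $m+1$ sets whose $r_X$-components have diameter $\le D_f(r_X,R_Y)$. For $k\ge m+1\ge1$, an $(m,k)$-dimensional control function of $f$ is $D_f\colon\mathbb R_+\times\mathbb R_+\to\mathbb R_+$ such that for all $r_X,R_Y>0$ every $A\subset X$ with $\operatorname{diam} f(A)\le R_Y$ can be written as $A_1\cup\dots\cup A_k$ where the $r_X$-components of each $A_i$ have diameter $\le D_f(r_X,R_Y)$ and every $x\in A$ belongs to at least $k-m$ of the sets $A_i$. *)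

theory Defs
  imports "HOL-Analysis.Analysis"
begin

text \<open>diam S \<le> R, written out literally (sup of distances \<le> R); avoids the
  junk value of the library's diameter on unbounded sets.\<close>
definition diam_le :: "'a::metric_space set \<Rightarrow> real \<Rightarrow> bool" where
  "diam_le S R \<longleftrightarrow> (\<forall>x\<in>S. \<forall>y\<in>S. dist x y \<le> R)"

definition r_component :: "real \<Rightarrow> 'a::metric_space set \<Rightarrow> 'a \<Rightarrow> 'a set" where
  "r_component r C x = {y \<in> C. (\<lambda>a b. a \<in> C \<and> b \<in> C \<and> dist a b \<le> r)\<^sup>*\<^sup>* x y}"

definition r_components :: "real \<Rightarrow> 'a::metric_space set \<Rightarrow> 'a set set" where
  "r_components r C = r_component r C ` C"

definition components_bounded :: "real \<Rightarrow> real \<Rightarrow> 'a::metric_space set \<Rightarrow> bool" where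
  "components_bounded r D C \<longleftrightarrow> (\<forall>K \<in> r_components r C. diam_le K D)"

text \<open>D : R+ x R+ -> R+ (we read R+ as the nonnegative reals on values; arguments positive).\<close>
definition control_range :: "(real \<Rightarrow> real \<Rightarrow> real) \<Rightarrow> bool" where
  "control_range D \<longleftrightarrow> (\<forall>r>0. \<forall>R>0. D r R \<ge> 0)"

definition dim_control ::
  "('a::metric_space \<Rightarrow> 'b::metric_space) \<Rightarrow> nat \<Rightarrow> (real \<Rightarrow> real \<Rightarrow> real) \<Rightarrow> bool" where
  "dim_control f m D \<longleftrightarrow> control_range D \<and>
     (\<forall>r>0. \<forall>R>0. \<forall>A. diam_le (f ` A) R \<longrightarrow>
        (\<exists>U :: nat \<Rightarrow> 'a set. A = (\<Union>i\<le>m. U i) \<and>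
           (\<forall>i\<le>m. components_bounded r (D r R) (U i))))"

definition mk_dim_control ::
  "('a::metric_space \<Rightarrow> 'b::metric_space) \<Rightarrow> nat \<Rightarrow> nat \<Rightarrow> (real \<Rightarrow> real \<Rightarrow> real) \<Rightarrow> bool" where
  "mk_dim_control f m k D \<longleftrightarrow> control_range D \<and>
     (\<forall>r>0. \<forall>R>0. \<forall>A. diam_le (f ` A) R \<longrightarrow>
        (\<exists>U :: nat \<Rightarrow> 'a set. A = (\<Union>i\<in>{1..k}. U i) \<and>
           (\<forall>i\<in>{1..k}. components_bounded r (D r R) (U i)) \<and>
           (\<forall>x\<in>A. card {i\<in>{1..k}. x \<in> U i} \<ge> k - m)))"

text \<open>D_iter D j = D^{(m+1+j)}: D^{(k)}(r,R) = D^{(k-1)}(3r,R) + 2r.\<close>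
primrec D_iter :: "(real \<Rightarrow> real \<Rightarrow> real) \<Rightarrow> nat \<Rightarrow> real \<Rightarrow> real \<Rightarrow> real" where
  "D_iter D 0 = D"
| "D_iter D (Suc j) = (\<lambda>r R. D_iter D j (3 * r) R + 2 * r)"

end

theory Submission
  imports Defs
begin

text \<open>Let \<open>U\<^sub>1, \<dots>, U\<^sub>k\<close> cover \<open>A\<close> with multiplicity at least \<open>k - m\<close>,
  the \<open>3r\<close>-components of each \<open>U\<^sub>i\<close> having diameter at most \<open>D\<close>. Replace \<open>U\<^sub>i\<close> by its
  \<open>r\<close>-neighbourhood \<open>B\<^sub>i\<close> in \<open>A\<close>: an \<open>r\<close>-chain in \<open>B\<^sub>i\<close> projects to a \<open>3r\<close>-chain in \<open>U\<^sub>i\<close>,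
  so the \<open>r\<close>-components of \<open>B\<^sub>i\<close> have diameter at most \<open>D + 2r\<close>. Add as a new member the set
  \<open>C\<close> of points lying in exactly \<open>k - m\<close> of the \<open>B\<^sub>i\<close>. At such a point the \<open>B\<^sub>i\<close> containing
  it are exactly the \<open>U\<^sub>i\<close> containing it, so an \<open>r\<close>-chain in \<open>C\<close> starting in \<open>U\<^sub>j\<close> never
  leaves \<open>U\<^sub>j\<close>. A point of \<open>C\<close> gains the membership in \<open>C\<close>, and a point outside \<open>C\<close> lies
  in more than \<open>k - m\<close> of the \<open>B\<^sub>i\<close>.\<close>

abbreviation r_linked :: "real \<Rightarrow> 'a::metric_space set \<Rightarrow> 'a \<Rightarrow> 'a \<Rightarrow> bool" where
  "r_linked r C \<equiv> (\<lambda>a b. a \<in> C \<and> b \<in> C \<and> dist a b \<le> r)\<^sup>*\<^sup>*"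

lemma r_linked_sym: "r_linked r C x y \<Longrightarrow> r_linked r C y x"
  by (rule sympD[OF symp_rtranclp]) (auto simp: symp_def dist_commute)

lemma r_linked_mem: "r_linked r C x y \<Longrightarrow> x \<in> C \<Longrightarrow> y \<in> C"
  by (induction rule: rtranclp_induct) auto

lemma components_bounded_iff_linked:
  "components_bounded r D C \<longleftrightarrow> (\<forall>x\<in>C. \<forall>y. r_linked r C x y \<longrightarrow> dist x y \<le> D)"
proof
  assume bounded: "components_bounded r D C"
  show "\<forall>x\<in>C. \<forall>y. r_linked r C x y \<longrightarrow> dist x y \<le> D"
  proof (intro ballI allI impI)
    fix x y assume "x \<in> C" and xy: "r_linked r C x y"
    then have "x \<in> r_component r C x" "y \<in> r_component r C x"
      using r_linked_mem unfolding r_component_def by auto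
    moreover have "r_component r C x \<in> r_components r C"
      using \<open>x \<in> C\<close> unfolding r_components_def by blast
    ultimately show "dist x y \<le> D"
      using bounded unfolding components_bounded_def diam_le_def by blast
  qed
next
  assume linked: "\<forall>x\<in>C. \<forall>y. r_linked r C x y \<longrightarrow> dist x y \<le> D"
  show "components_bounded r D C"
    unfolding components_bounded_def diam_le_def r_components_def
  proof (intro ballI)
    fix K y z assume "K \<in> r_component r C ` C" "y \<in> K" "z \<in> K"
    then obtain x where "y \<in> C" "r_linked r C x y" "r_linked r C x z"
      unfolding r_component_def by blast
    then have "r_linked r C y z"
      using r_linked_sym rtranclp_trans[of _ y x z] by blast
    with \<open>y \<in> C\<close> show "dist y z \<le> D" using linked by blast
  qed
qed

lemma components_bounded_mono:
  assumes "components_bounded r D C" and "r' \<le> r" and "D \<le> D'"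
  shows "components_bounded r' D' C"
proof -
  have "r_linked r C x y" if "r_linked r' C x y" for x y
    using that by (rule rtranclp_mono[THEN predicate2D, rotated]) (use assms(2) in auto)
  then show ?thesis
    using assms(1,3) unfolding components_bounded_iff_linked by fastforce
qed

lemma dist_triangle_via_two: "dist x y \<le> dist x a + dist a b + dist b y"
  using dist_triangle[of x y a] dist_triangle[of a y b] by linarith

lemma components_bounded_thickening:
  assumes bounded: "components_bounded (r + 2*\<delta>) D U"
    and close: "\<forall>x\<in>B. \<exists>a\<in>U. dist x a \<le> \<delta>"
  shows "components_bounded r (D + 2*\<delta>) B"
proof -
  obtain g where g: "\<And>x. x \<in> B \<Longrightarrow> g x \<in> U \<and> dist x (g x) \<le> \<delta>"
    using close by metis
  have projected: "r_linked (r + 2*\<delta>) U (g x) (g y)" if "r_linked r B x y" "x \<in> B" for x y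
    using that
  proof (induction rule: rtranclp_induct)
    case (step y z)
    have "dist (g y) (g z) \<le> dist (g y) y + dist y z + dist z (g z)"
      by (rule dist_triangle_via_two)
    also have "\<dots> \<le> r + 2*\<delta>"
      using g[of y] g[of z] step.hyps(2) by (simp add: dist_commute)
    finally show ?case
      using step g by (auto intro: rtranclp.rtrancl_into_rtrancl[of _ "g x" "g y" "g z"])
  qed simp
  show ?thesis unfolding components_bounded_iff_linked
  proof (intro ballI allI impI)
    fix x y assume "x \<in> B" and xy: "r_linked r B x y"
    have "y \<in> B" using xy \<open>x \<in> B\<close> by (rule r_linked_mem)
    have "dist x y \<le> dist x (g x) + dist (g x) (g y) + dist (g y) y"
      by (rule dist_triangle_via_two)
    moreover have "dist (g x) (g y) \<le> D"
      using bounded projected[OF xy \<open>x \<in> B\<close>] g[OF \<open>x \<in> B\<close>]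
      unfolding components_bounded_iff_linked by blast
    ultimately show "dist x y \<le> D + 2*\<delta>"
      using g[OF \<open>x \<in> B\<close>] g[OF \<open>y \<in> B\<close>] by (simp add: dist_commute)
  qed
qed

lemma components_bounded_absorbing_cover:
  assumes cover: "\<forall>x\<in>C. \<exists>j\<in>J. x \<in> U j"
    and absorbing: "\<forall>j\<in>J. \<forall>a\<in>C \<inter> U j. \<forall>b\<in>C. dist a b \<le> r \<longrightarrow> b \<in> U j"
    and bounded: "\<forall>j\<in>J. components_bounded r D (U j)"
  shows "components_bounded r D C"
  unfolding components_bounded_iff_linked
proof (intro ballI allI impI)
  fix x y assume "x \<in> C" and xy: "r_linked r C x y"
  obtain j where "j \<in> J" "x \<in> U j" using cover \<open>x \<in> C\<close> by blast
  have "r_linked r (U j) x y \<and> y \<in> C \<inter> U j"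
    using xy
  proof (induction rule: rtranclp_induct)
    case (step y z)
    then have "z \<in> U j" using absorbing \<open>j \<in> J\<close> by blast
    moreover have "y \<in> U j" and "dist y z \<le> r" using step by auto
    ultimately have "r_linked r (U j) x z"
      using step.IH by (auto intro: rtranclp.rtrancl_into_rtrancl[of _ x y z])
    with step \<open>z \<in> U j\<close> show ?case by simp
  qed (use \<open>x \<in> C\<close> \<open>x \<in> U j\<close> in simp)
  then show "dist x y \<le> D"
    using bounded \<open>j \<in> J\<close> \<open>x \<in> U j\<close> unfolding components_bounded_iff_linked by blast
qed

lemma card_members_extend:
  assumes "\<mu> \<le> card {i\<in>{1..k}. x \<in> B i}"
    and "x \<in> C \<longleftrightarrow> card {i\<in>{1..k}. x \<in> B i} = \<mu>"
  shows "Suc \<mu> \<le> card {i\<in>{1..Suc k}. x \<in> (if i = Suc k then C else B i)}"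
proof -
  let ?S = "{i\<in>{1..k}. x \<in> B i}" and ?S' = "{i\<in>{1..Suc k}. x \<in> (if i = Suc k then C else B i)}"
  have "?S \<subseteq> ?S'" by auto
  show ?thesis
  proof (cases "x \<in> C")
    case True
    with \<open>?S \<subseteq> ?S'\<close> have "insert (Suc k) ?S \<subseteq> ?S'" by auto
    then have "card (insert (Suc k) ?S) \<le> card ?S'" by (intro card_mono) auto
    with True assms(2) show ?thesis by simp
  next
    case False
    then have "\<mu> < card ?S" using assms by simp
    also have "\<dots> \<le> card ?S'" using \<open>?S \<subseteq> ?S'\<close> by (intro card_mono) auto
    finally show ?thesis by simp
  qed
qed

definition nbhd_within :: "'a::metric_space set \<Rightarrow> real \<Rightarrow> 'a set \<Rightarrow> 'a set" where
  "nbhd_within A r U = {x\<in>A. \<exists>a\<in>U. dist x a \<le> r}"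

lemma subset_nbhd_within: "U \<subseteq> A \<Longrightarrow> 0 \<le> r \<Longrightarrow> U \<subseteq> nbhd_within A r U"
  unfolding nbhd_within_def by force

lemma components_bounded_nbhd_within:
  "components_bounded (3*r) D U \<Longrightarrow> components_bounded r (D + 2*r) (nbhd_within A r U)"
  by (rule components_bounded_thickening) (auto simp: nbhd_within_def)

text \<open>At a point of exact multiplicity \<open>\<mu>\<close> the neighbourhoods containing it are exactly the
  \<open>U i\<close> containing it, so no \<open>r\<close>-step inside the set of such points leaves a \<open>U i\<close>.\<close>

lemma components_bounded_exact_multiplicity:
  fixes U :: "nat \<Rightarrow> 'a::metric_space set"
  assumes "0 \<le> r"
    and cover: "A = (\<Union>i\<in>I. U i)" and "finite I"
    and bounded: "\<forall>i\<in>I. components_bounded (3*r) D (U i)"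
    and mult: "\<forall>x\<in>A. card {i\<in>I. x \<in> U i} \<ge> \<mu>"
  shows "components_bounded r D {x\<in>A. card {i\<in>I. x \<in> nbhd_within A r (U i)} = \<mu>}"
    (is "components_bounded r D ?C")
proof (rule components_bounded_absorbing_cover[where J = I and U = U])
  have absorbed: "x \<in> U j" if "x \<in> ?C" "x \<in> nbhd_within A r (U j)" "j \<in> I" for x j
  proof -
    have "{i\<in>I. x \<in> U i} \<subseteq> {i\<in>I. x \<in> nbhd_within A r (U i)}"
      using subset_nbhd_within cover \<open>0 \<le> r\<close> by blast
    moreover have "card {i\<in>I. x \<in> nbhd_within A r (U i)} \<le> card {i\<in>I. x \<in> U i}"
      using mult \<open>x \<in> ?C\<close> by auto
    ultimately have "{i\<in>I. x \<in> U i} = {i\<in>I. x \<in> nbhd_within A r (U i)}"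
      using \<open>finite I\<close> by (intro card_seteq) auto
    then show ?thesis using that by auto
  qed
  show "\<forall>j\<in>I. \<forall>a\<in>?C \<inter> U j. \<forall>b\<in>?C. dist a b \<le> r \<longrightarrow> b \<in> U j"
  proof (intro ballI impI)
    fix j a b assume "j \<in> I" "a \<in> ?C \<inter> U j" "b \<in> ?C" "dist a b \<le> r"
    then have "b \<in> nbhd_within A r (U j)" unfolding nbhd_within_def by (auto simp: dist_commute)
    with \<open>b \<in> ?C\<close> \<open>j \<in> I\<close> show "b \<in> U j" using absorbed by blast
  qed
  show "\<forall>x\<in>?C. \<exists>j\<in>I. x \<in> U j" using cover by blast
  show "\<forall>j\<in>I. components_bounded r D (U j)"
    using bounded \<open>0 \<le> r\<close> components_bounded_mono[of "3*r" D _ r D] by auto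
qed

lemma cover_add_member:
  fixes U :: "nat \<Rightarrow> 'a::metric_space set"
  assumes "m < k" and "0 \<le> r"
    and cover: "A = (\<Union>i\<in>{1..k}. U i)"
    and bounded: "\<forall>i\<in>{1..k}. components_bounded (3*r) D (U i)"
    and mult: "\<forall>x\<in>A. card {i\<in>{1..k}. x \<in> U i} \<ge> k - m"
  obtains V where "A = (\<Union>i\<in>{1..Suc k}. V i)"
    and "\<forall>i\<in>{1..Suc k}. components_bounded r (D + 2*r) (V i)"
    and "\<forall>x\<in>A. card {i\<in>{1..Suc k}. x \<in> V i} \<ge> Suc k - m"
proof
  define B where "B i = nbhd_within A r (U i)" for i
  define C where "C = {x\<in>A. card {i\<in>{1..k}. x \<in> B i} = k - m}"
  define V where "V i = (if i = Suc k then C else B i)" for i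
  have U_B: "U i \<subseteq> B i" if "i \<in> {1..k}" for i
    unfolding B_def using that cover \<open>0 \<le> r\<close> by (intro subset_nbhd_within) auto
  show "A = (\<Union>i\<in>{1..Suc k}. V i)"
  proof
    show "A \<subseteq> (\<Union>i\<in>{1..Suc k}. V i)"
    proof
      fix x assume "x \<in> A"
      then obtain i where "i \<in> {1..k}" "x \<in> U i" using cover by blast
      then have "x \<in> V i" using U_B unfolding V_def by auto
      with \<open>i \<in> {1..k}\<close> show "x \<in> (\<Union>i\<in>{1..Suc k}. V i)" by auto
    qed
    show "(\<Union>i\<in>{1..Suc k}. V i) \<subseteq> A"
      unfolding V_def B_def C_def nbhd_within_def by auto
  qed
  have "components_bounded r D C"
    unfolding C_def B_def using assms(2) cover _ bounded mult
    by (rule components_bounded_exact_multiplicity) simp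
  then have "components_bounded r (D + 2*r) C"
    using \<open>0 \<le> r\<close> components_bounded_mono[of r D C r "D + 2*r"] by simp
  moreover have "components_bounded r (D + 2*r) (B i)" if "i \<in> {1..k}" for i
    unfolding B_def using bounded that by (intro components_bounded_nbhd_within) simp
  ultimately show "\<forall>i\<in>{1..Suc k}. components_bounded r (D + 2*r) (V i)"
    by (auto simp: V_def)
  show "\<forall>x\<in>A. card {i\<in>{1..Suc k}. x \<in> V i} \<ge> Suc k - m"
  proof
    fix x assume "x \<in> A"
    have "card {i\<in>{1..k}. x \<in> U i} \<le> card {i\<in>{1..k}. x \<in> B i}"
      using U_B by (intro card_mono) auto
    then have "k - m \<le> card {i\<in>{1..k}. x \<in> B i}"
      using mult \<open>x \<in> A\<close> by (meson order_trans)
    moreover have "x \<in> C \<longleftrightarrow> card {i\<in>{1..k}. x \<in> B i} = k - m"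
      using \<open>x \<in> A\<close> unfolding C_def by simp
    ultimately have "Suc (k - m) \<le> card {i\<in>{1..Suc k}. x \<in> V i}"
      unfolding V_def by (rule card_members_extend)
    with \<open>m < k\<close> show "card {i\<in>{1..Suc k}. x \<in> V i} \<ge> Suc k - m" by simp
  qed
qed

lemma mk_dim_control_of_dim_control:
  assumes "dim_control f m D"
  shows "mk_dim_control f m (m+1) D"
  unfolding mk_dim_control_def
proof (intro conjI allI impI)
  show "control_range D" using assms unfolding dim_control_def by blast
  fix r R :: real and A assume "r > 0" "R > 0" "diam_le (f ` A) R"
  then obtain U where cover: "A = (\<Union>i\<le>m. U i)"
    and bounded: "\<forall>i\<le>m. components_bounded r (D r R) (U i)"
    using assms unfolding dim_control_def by blast
  have shift: "(\<Union>i\<in>{1..m+1}. U (i - 1)) = (\<Union>i\<le>m. U i)"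
    by (force simp: image_iff)
  show "\<exists>V. A = (\<Union>i\<in>{1..m+1}. V i) \<and>
      (\<forall>i\<in>{1..m+1}. components_bounded r (D r R) (V i)) \<and>
      (\<forall>x\<in>A. card {i\<in>{1..m+1}. x \<in> V i} \<ge> m + 1 - m)"
  proof (intro exI[of _ "\<lambda>i. U (i - 1)"] conjI ballI)
    show "A = (\<Union>i\<in>{1..m+1}. U (i - 1))" using cover shift by simp
    show "components_bounded r (D r R) (U (i - 1))" if "i \<in> {1..m+1}" for i
      using bounded that by auto
    show "card {i\<in>{1..m+1}. x \<in> U (i - 1)} \<ge> m + 1 - m" if "x \<in> A" for x
    proof -
      obtain j where "j \<le> m" "x \<in> U j" using cover \<open>x \<in> A\<close> by auto
      then have "{Suc j} \<subseteq> {i\<in>{1..m+1}. x \<in> U (i - 1)}" by auto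
      from card_mono[OF _ this] show ?thesis by simp
    qed
  qed
qed

lemma mk_dim_control_Suc:
  assumes control: "mk_dim_control f m k Dk" and "m < k"
  shows "mk_dim_control f m (Suc k) (\<lambda>r R. Dk (3*r) R + 2*r)"
  unfolding mk_dim_control_def
proof (intro conjI allI impI)
  show "control_range (\<lambda>r R. Dk (3*r) R + 2*r)"
    unfolding control_range_def
  proof (intro allI impI)
    fix r R :: real assume "r > 0" "R > 0"
    then have "Dk (3*r) R \<ge> 0"
      using control unfolding mk_dim_control_def control_range_def by simp
    with \<open>r > 0\<close> show "Dk (3*r) R + 2*r \<ge> 0" by simp
  qed
  fix r R :: real and A assume "r > 0" "R > 0" "diam_le (f ` A) R"
  then have "\<exists>U. A = (\<Union>i\<in>{1..k}. U i) \<and>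
      (\<forall>i\<in>{1..k}. components_bounded (3*r) (Dk (3*r) R) (U i)) \<and>
      (\<forall>x\<in>A. card {i\<in>{1..k}. x \<in> U i} \<ge> k - m)"
    using control unfolding mk_dim_control_def by simp
  then obtain U where cover: "A = (\<Union>i\<in>{1..k}. U i)"
    and bounded: "\<forall>i\<in>{1..k}. components_bounded (3*r) (Dk (3*r) R) (U i)"
    and mult: "\<forall>x\<in>A. card {i\<in>{1..k}. x \<in> U i} \<ge> k - m"
    by blast
  have "0 \<le> r" using \<open>r > 0\<close> by simp
  obtain V where "A = (\<Union>i\<in>{1..Suc k}. V i)"
    and "\<forall>i\<in>{1..Suc k}. components_bounded r (Dk (3*r) R + 2*r) (V i)"
    and "\<forall>x\<in>A. card {i\<in>{1..Suc k}. x \<in> V i} \<ge> Suc k - m"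
    by (rule cover_add_member[OF \<open>m < k\<close> \<open>0 \<le> r\<close> cover bounded mult])
  then show "\<exists>V. A = (\<Union>i\<in>{1..Suc k}. V i) \<and>
      (\<forall>i\<in>{1..Suc k}. components_bounded r (Dk (3*r) R + 2*r) (V i)) \<and>
      (\<forall>x\<in>A. card {i\<in>{1..Suc k}. x \<in> V i} \<ge> Suc k - m)"
    by blast
qed

theorem mainTheorem13:
  fixes f :: "'a::metric_space \<Rightarrow> 'b::metric_space" and m :: nat
    and D :: "real \<Rightarrow> real \<Rightarrow> real"
  assumes "dim_control f m D"
  shows "\<forall>k\<ge>m+1. mk_dim_control f m k (D_iter D (k - (m+1)))"
proof -
  have "mk_dim_control f m (m+1+j) (D_iter D j)" for j
  proof (induction j)
    case 0
    show ?case using mk_dim_control_of_dim_control[OF assms] by simp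
  next
    case (Suc j)
    show ?case using mk_dim_control_Suc[OF Suc] by simp
  qed
  then show ?thesis by (metis le_add_diff_inverse)
qed

end
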